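(* Let $N$ be an odd square-free integer, $1<\ell\mid N$, and $m\mid N$. Then for all $n\ge 0$, $$H(\ell,m,N;\ell n)=\gcd\!\Big(\ell,\frac{N}{m}\Big)\,H_{m,N}(n).$$
   Context: A discriminant is an integer $\equiv0,1\pmod4$, fundamental if not of the form $Df^2$ with $f>1$ and $D$ a discriminant. $\chi_D=(\frac D\cdot)$ is the Kronecker symbol, $(\frac{\cdot}{\ell})$ the Jacobi symbol mod $\ell$, $L_m(s,\chi)=L(s,\chi)\prod_{p\mid m}(1-\chi(p)p^{-s})$, $\sigma_{m,N,1}(r)=\sum_{d\mid r,\gcd(d,m)=1,\gcd(r/d,N/m)=1}d$, $\mu$ Möbius, and $\gcd$ is the positive gcd. Generalized Pei–Wang class numbers: for $N$ odd square-free, $\ell\mid N$, $m\mid N$, $\varepsilon=(-1)^{(\ell-1)/2}$, and integer $n\ge0$: $H(\ell,m,N;0)=-\frac1{12}\prod_{p\mid N}(1-p)$ if $m=N$ and $0$ if $m\neq N$; $H(\ell,m,N;n)=0$ if $n>0$ and $-\varepsilon n$ is not a discriminant; otherwise write $-\varepsilon n=D_{\ell,n}f_n^2$ and $-\ell n=D'_{\ell,n}(f'_n)^2$ with $D_{\ell,n},D'_{\ell,n}$ fundamental discriminants, and $$H(\ell,m,N;n)=L_m(0,\chi_{D'_{\ell,n}})\prod_{p\mid N/m}\frac{1-\chi_{D'_{\ell,n}}(p)p^{-1}}{1-p^{-2}}\cdot\frac{\gcd(\ell,D_{\ell,n})}{\gcd(\ell,D_{\ell,n},m)}\sum_{\substack{a\mid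 f_n\\ \gcd(a,N)=1}}\mu(a)\chi_{D_{\ell,n}}(a)\Big(\frac{a}{\ell}\Big)\sigma_{m,N,1}\Big(\frac{f_n}{a}\Big).$$ $H_{m,N}(n):=H(1,m,N;n)$ (the case $\ell=1$). *)

theory Defs
  imports "HOL-Number_Theory.Number_Theory" "HOL-Computational_Algebra.Squarefree"
begin

definition is_disc :: "int \<Rightarrow> bool" where
  "is_disc D \<longleftrightarrow> D mod 4 = 0 \<or> D mod 4 = 1"

definition fund_disc :: "int \<Rightarrow> bool" where
  "fund_disc D \<longleftrightarrow> is_disc D \<and>
     \<not> (\<exists>D' (f::int). f > 1 \<and> is_disc D' \<and> D = D' * f^2)"

definition fund_part :: "int \<Rightarrow> int" where
  "fund_part x = (THE D. fund_disc D \<and> (\<exists>f::nat. f > 0 \<and> x = D * int f ^ 2))"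

definition cond_part :: "int \<Rightarrow> nat" where
  "cond_part x = (THE f::nat. f > 0 \<and> x = fund_part x * int f ^ 2)"

definition kron_prime :: "int \<Rightarrow> nat \<Rightarrow> int" where
  "kron_prime D p =
     (if p = 2 then (if even D then 0 else if D mod 8 = 1 \<or> D mod 8 = 7 then 1 else -1)
      else Legendre D (int p))"

text \<open>Kronecker symbol (D / n) for n \<ge> 1 (completely multiplicative in n).\<close>
definition kronecker :: "int \<Rightarrow> nat \<Rightarrow> int" where
  "kronecker D n = (\<Prod>p\<in>prime_factors n. kron_prime D p ^ multiplicity p n)"

text \<open>Jacobi symbol (a / l) for odd l \<ge> 1.\<close>
definition jacobi :: "int \<Rightarrow> nat \<Rightarrow> int" where
  "jacobi a l = (\<Prod>p\<in>prime_factors l. Legendre a (int p) ^ multiplicity p l)"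

definition moebius :: "nat \<Rightarrow> int" where
  "moebius n = (if n > 0 \<and> squarefree n then (-1) ^ card (prime_factors n) else 0)"

definition sigma_mN1 :: "nat \<Rightarrow> nat \<Rightarrow> nat \<Rightarrow> nat" where
  "sigma_mN1 m N r = (\<Sum>d\<in>{d. d dvd r \<and> coprime d m \<and> coprime (r div d) (N div m)}. d)"

text \<open>For a fundamental discriminant D, chi_D is primitive of conductor |D| and
  L(0, chi_D) = - B_{1,chi_D} = - sum_{a=1}^{|D|} chi_D(a) (a/|D| - 1/2)
  (this gives zeta(0) = -1/2 for D = 1).\<close>
definition L0 :: "int \<Rightarrow> real" where
  "L0 D = - (\<Sum>a=1..nat \<bar>D\<bar>. of_int (kronecker D a) * (real a / real (nat \<bar>D\<bar>) - 1/2))"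

definition L0_m :: "nat \<Rightarrow> int \<Rightarrow> real" where
  "L0_m m D = L0 D * (\<Prod>p\<in>prime_factors m. 1 - of_int (kronecker D p))"

definition eps :: "nat \<Rightarrow> int" where
  "eps l = (-1) ^ ((l - 1) div 2)"

definition H :: "nat \<Rightarrow> nat \<Rightarrow> nat \<Rightarrow> nat \<Rightarrow> real" where
  "H l m N n =
    (if n = 0 then (if m = N then - 1/12 * (\<Prod>p\<in>prime_factors N. 1 - real p) else 0)
     else if \<not> is_disc (- eps l * int n) then 0
     else
       (let D = fund_part (- eps l * int n);
            f = cond_part (- eps l * int n);
            D' = fund_part (- int l * int n)
        in L0_m m D'
           * (\<Prod>p\<in>prime_factors (N div m).
                (1 - of_int (kronecker D' p) / real p) / (1 - 1 / (real p)^2))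
           * (real_of_int (gcd (int l) D) / real_of_int (gcd (gcd (int l) D) (int m)))
           * (\<Sum>a\<in>{a. a dvd f \<and> coprime a N}.
                of_int (moebius a * kronecker D a * jacobi (int a) l)
                * real (sigma_mN1 m N (f div a)))))"

abbreviation H1 :: "nat \<Rightarrow> nat \<Rightarrow> nat \<Rightarrow> real" where
  "H1 m N n \<equiv> H 1 m N n"

end

(*
  Write -n = D f^2 with D fundamental, and split l = g h with g = gcd(l, D), D = g D0.
  Since eps_l l is 1 mod 4, -eps_l l n = (eps_l h D0) (g f)^2 where eps_l h D0 is again
  fundamental, while -l (l n) = D (l f)^2; so both sides share the L-value and the Euler
  factors, and the gcd factor on the left is h / gcd(h, m). Quadratic reciprocity, in the
  form chi_{eps_k k}(a) = (a / k), turns chi_{eps_l h D0}(a) (a / l) into chi_D(a), and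
  sigma_{m,N,1}(g r) = g / gcd(g, m) sigma_{m,N,1}(r). The two factors multiply to
  l / gcd(l, m) = gcd(l, N / m).
*)
theory Submission
  imports Defs
begin

section \<open>Legendre symbol\<close>

lemma Legendre_cases: "Legendre a p \<in> {-1, 0, 1}"
  by (simp add: Legendre_def)

lemma cong_sign_imp_eq:
  fixes x y :: int
  assumes "x \<in> {-1, 0, 1}" "y \<in> {-1, 0, 1}" "[x = y] (mod int p)" "p > 2"
  shows "x = y"
proof -
  have "int p dvd \<bar>x - y\<bar>" using assms(3) by (simp add: cong_iff_dvd_diff)
  moreover have "\<bar>x - y\<bar> \<in> {0, 1, 2}" using assms(1,2) by auto
  ultimately have "\<bar>x - y\<bar> = 0"
    using assms(4) zdvd_imp_le[of "int p" "\<bar>x - y\<bar>"] by fastforce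
  then show ?thesis by simp
qed

lemma Legendre_mult:
  assumes "prime p" "p > 2"
  shows "Legendre (a * b) (int p) = Legendre a (int p) * Legendre b (int p)"
proof -
  have "[Legendre (a * b) p = (a * b) ^ ((p - 1) div 2)] (mod p)"
       "[Legendre a p * Legendre b p = a ^ ((p - 1) div 2) * b ^ ((p - 1) div 2)] (mod p)"
    using euler_criterion assms cong_mult by blast+
  then have "[Legendre (a * b) p = Legendre a p * Legendre b p] (mod p)"
    by (metis cong_sym cong_trans power_mult_distrib)
  moreover have "Legendre a p * Legendre b p \<in> {-1, 0, 1}"
    using Legendre_cases[of a p] Legendre_cases[of b p] by auto
  ultimately show ?thesis using cong_sign_imp_eq Legendre_cases assms(2) by blast
qed

lemma Legendre_minus_one:
  assumes "prime p" "p > 2"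
  shows "Legendre (-1) (int p) = (-1) ^ ((p - 1) div 2)"
proof -
  have "[Legendre (-1) p = (-1) ^ ((p - 1) div 2)] (mod p)"
    using euler_criterion assms by blast
  moreover have "((-1::int) ^ ((p - 1) div 2)) \<in> {-1, 0, 1}"
    by (cases "even ((p - 1) div 2)") auto
  ultimately show ?thesis using cong_sign_imp_eq Legendre_cases assms(2) by blast
qed

lemma Legendre_nonzero:
  assumes "prime p" "\<not> int p dvd a"
  shows "Legendre a (int p) \<in> {-1, 1}"
  using assms by (auto simp: Legendre_def cong_0_iff)

lemma Legendre_square:
  assumes "prime p" "\<not> int p dvd a"
  shows "Legendre (a ^ 2) (int p) = 1"
proof -
  have "\<not> int p dvd a ^ 2"
    using assms prime_dvd_power[of "int p" a 2] by auto
  moreover have "QuadRes (int p) (a ^ 2)"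
    unfolding QuadRes_def by (auto intro: cong_refl)
  ultimately show ?thesis by (simp add: Legendre_def cong_0_iff)
qed

lemma Legendre_one: "prime p \<Longrightarrow> Legendre 1 (int p) = 1"
  using Legendre_square[of p 1] prime_gt_1_nat[of p] by simp

text \<open>By Gauss's lemma: of the residues \<open>2x\<close>, \<open>0 < x \<le> h = (p - 1) / 2\<close>, those exceeding
  \<open>p / 2\<close> are the ones with \<open>x > h div 2\<close>.\<close>
lemma Legendre_two:
  assumes "prime p" "p > 2"
  shows "Legendre 2 (int p) = (if p mod 8 = 1 \<or> p mod 8 = 7 then 1 else -1)"
proof -
  have "\<not> int p dvd 2"
    using assms zdvd_imp_le[of "int p" 2] by auto
  then interpret G: GAUSS p 2
    using assms by unfold_locales (auto simp: cong_0_iff)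
  define h where "h = (int p - 1) div 2"
  have "G.C = (\<lambda>x. (x * 2) mod int p) ` {0<..h}"
    unfolding G.C_def G.B_def G.A_def h_def by (simp add: image_image)
  also have "\<dots> = (\<lambda>x. x * 2) ` {0<..h}"
    by (rule image_cong) (auto simp: h_def)
  finally have "G.E = (\<lambda>x. x * 2) ` {h div 2<..h}"
    unfolding G.E_def h_def[symmetric] by auto
  then have "card G.E = nat (h - h div 2)"
    by (simp add: card_image inj_on_def)
  moreover have "h - h div 2 \<ge> 0" "even (h - h div 2) \<longleftrightarrow> p mod 8 = 1 \<or> p mod 8 = 7"
    using prime_odd_nat[OF assms] unfolding h_def by presburger+
  ultimately have "even (card G.E) \<longleftrightarrow> p mod 8 = 1 \<or> p mod 8 = 7"
    by (simp add: even_nat_iff)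
  then show ?thesis
    using G.gauss_lemma by simp
qed

section \<open>Kronecker and Jacobi symbols\<close>

lemma eps_odd:
  assumes "odd k"
  shows "eps k = (if k mod 4 = 1 then 1 else -1)"
proof -
  have "even ((k - 1) div 2) \<longleftrightarrow> k mod 4 = 1" using assms by presburger
  then show ?thesis unfolding eps_def by auto
qed

lemma eps_1: "eps 1 = 1"
  by (simp add: eps_def)

lemma eps_cases: "eps k \<in> {-1, 1}"
  unfolding eps_def by (cases "even ((k - 1) div 2)") auto

lemma eps_times_self: "eps k * eps k = 1"
  using eps_cases[of k] by auto

lemma eps_mult:
  assumes "odd k1" "odd k2"
  shows "eps (k1 * k2) = eps k1 * eps k2"
proof -
  have "(k1 * k2) mod 4 = ((k1 mod 4) * (k2 mod 4)) mod 4"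
    by (simp add: mod_mult_eq)
  moreover have "k1 mod 4 = 1 \<or> k1 mod 4 = 3" "k2 mod 4 = 1 \<or> k2 mod 4 = 3"
    using assms by presburger+
  ultimately show ?thesis using assms by (auto simp: eps_odd)
qed

lemma eps_mult_self_mod4:
  assumes "odd k"
  shows "(eps k * int k) mod 4 = 1"
proof -
  have "k mod 4 = 1 \<or> k mod 4 = 3" using assms by presburger
  then show ?thesis using assms by (auto simp: eps_odd) presburger+
qed

lemma kron_prime_mult:
  assumes "prime p"
  shows "kron_prime (a * b) p = kron_prime a p * kron_prime b p"
proof (cases "p = 2")
  case True
  have residues: "(r * s) mod 8 \<in> {1, 7} \<longleftrightarrow> (r \<in> {1, 7} \<longleftrightarrow> s \<in> {1, 7})"
    if "r \<in> {1, 3, 5, 7}" "s \<in> {1, 3, 5, 7}" for r s :: int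
    using that by auto
  show ?thesis
  proof (cases "even a \<or> even b")
    case False
    then have "a mod 8 \<in> {1, 3, 5, 7}" "b mod 8 \<in> {1, 3, 5, 7}"
      by (simp_all, presburger+)
    moreover have "(a * b) mod 8 = ((a mod 8) * (b mod 8)) mod 8"
      by (simp add: mod_mult_eq)
    ultimately show ?thesis
      using False True residues[of "a mod 8" "b mod 8"] by (simp add: kron_prime_def)
  qed (use True in \<open>auto simp: kron_prime_def\<close>)
next
  case False
  then have "p > 2" using assms prime_ge_2_nat[of p] by linarith
  then show ?thesis using False assms Legendre_mult by (simp add: kron_prime_def)
qed

lemma prod_prime_factors_power_mult:
  fixes \<chi> :: "nat \<Rightarrow> 'a :: comm_monoid_mult"
  assumes "a > 0" "b > 0"
  shows "(\<Prod>p\<in>prime_factors (a * b). \<chi> p ^ multiplicity p (a * b)) =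
         (\<Prod>p\<in>prime_factors a. \<chi> p ^ multiplicity p a) *
         (\<Prod>p\<in>prime_factors b. \<chi> p ^ multiplicity p b)"
proof -
  define S where "S = prime_factors (a * b)"
  have S: "S = prime_factors a \<union> prime_factors b"
    unfolding S_def using assms by (simp add: prime_factors_product)
  have restrict:
    "(\<Prod>p\<in>S. \<chi> p ^ multiplicity p c) = (\<Prod>p\<in>prime_factors c. \<chi> p ^ multiplicity p c)"
    if "prime_factors c \<subseteq> S" for c
    by (rule prod.mono_neutral_right)
      (use that in \<open>auto simp: S_def in_prime_factors_iff not_dvd_imp_multiplicity_0\<close>)
  have "(\<Prod>p\<in>S. \<chi> p ^ multiplicity p (a * b)) =
        (\<Prod>p\<in>S. \<chi> p ^ multiplicity p a * \<chi> p ^ multiplicity p b)"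
    using assms
    by (intro prod.cong)
      (auto simp: S_def in_prime_factors_iff prime_elem_multiplicity_mult_distrib power_add)
  also have "\<dots> = (\<Prod>p\<in>S. \<chi> p ^ multiplicity p a) * (\<Prod>p\<in>S. \<chi> p ^ multiplicity p b)"
    by (rule prod.distrib)
  also have "\<dots> = (\<Prod>p\<in>prime_factors a. \<chi> p ^ multiplicity p a) *
                    (\<Prod>p\<in>prime_factors b. \<chi> p ^ multiplicity p b)"
    using restrict[of a] restrict[of b] S by (metis Un_upper1 Un_upper2)
  finally show ?thesis
    unfolding S_def .
qed

lemma kronecker_mult_right:
  "a > 0 \<Longrightarrow> b > 0 \<Longrightarrow> kronecker D (a * b) = kronecker D a * kronecker D b"
  unfolding kronecker_def by (rule prod_prime_factors_power_mult)

lemma jacobi_mult_right: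
  "a > 0 \<Longrightarrow> b > 0 \<Longrightarrow> jacobi x (a * b) = jacobi x a * jacobi x b"
  unfolding jacobi_def by (rule prod_prime_factors_power_mult)

lemma kronecker_mult_left: "kronecker (D1 * D2) n = kronecker D1 n * kronecker D2 n"
  unfolding kronecker_def
  by (auto simp: kron_prime_mult in_prime_factors_iff power_mult_distrib prod.distrib[symmetric]
           intro!: prod.cong)

lemma jacobi_mult_left:
  assumes "odd l"
  shows "jacobi (a * b) l = jacobi a l * jacobi b l"
proof -
  have "Legendre (a * b) (int p) = Legendre a (int p) * Legendre b (int p)"
    if "p \<in> prime_factors l" for p
  proof -
    have "prime p" "odd p" using that assms by (auto simp: in_prime_factors_iff dvd_trans)
    then show ?thesis using Legendre_mult prime_ge_2_nat[of p] by (metis le_neq_implies_less dvd_refl)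
  qed
  then show ?thesis unfolding jacobi_def
    by (auto simp: power_mult_distrib prod.distrib[symmetric] intro!: prod.cong)
qed

lemma kronecker_prime: "prime p \<Longrightarrow> kronecker D p = kron_prime D p"
  unfolding kronecker_def by (simp add: prime_prime_factors multiplicity_self)

lemma jacobi_prime: "prime q \<Longrightarrow> jacobi a q = Legendre a (int q)"
  unfolding jacobi_def by (simp add: prime_prime_factors multiplicity_self)

lemma kronecker_1: "kronecker D 1 = 1"
  unfolding kronecker_def by simp

lemma jacobi_1: "jacobi a 1 = 1"
  unfolding jacobi_def by simp

lemma kron_prime_one_left: "prime p \<Longrightarrow> kron_prime 1 p = 1"
  by (simp add: kron_prime_def Legendre_one)

lemma kronecker_one_left: "kronecker 1 n = 1"
  unfolding kronecker_def by (auto simp: kron_prime_one_left in_prime_factors_iff intro!: prod.neutral)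

lemma jacobi_one_left: "jacobi 1 l = 1"
  unfolding jacobi_def by (auto simp: Legendre_one in_prime_factors_iff intro!: prod.neutral)

lemma jacobi_square:
  assumes "coprime a l"
  shows "jacobi (int a ^ 2) l = 1"
  unfolding jacobi_def
proof (rule prod.neutral, rule ballI)
  fix q assume "q \<in> prime_factors l"
  then have "prime q" "\<not> q dvd a"
    using assms by (auto simp: in_prime_factors_iff) (meson coprime_common_divisor not_prime_unit)
  then show "Legendre (int a ^ 2) (int q) ^ multiplicity q l = 1"
    using Legendre_square[of q "int a"] by simp
qed

text \<open>Quadratic reciprocity in Kronecker form: \<open>\<chi>\<^sub>q\<^sub>*(p) = (p/q)\<close> for the prime discriminant
  \<open>q\<^sup>* = \<epsilon>\<^sub>q q\<close>; the case \<open>p = 2\<close> is the second supplementary law.\<close>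
lemma kron_prime_eps_prime:
  assumes "prime q" "q > 2" "prime p" "p \<noteq> q"
  shows "kron_prime (eps q * int q) p = Legendre (int p) (int q)"
proof (cases "p = 2")
  case True
  have "odd q" using assms prime_odd_nat by blast
  then have q8: "q mod 8 = 1 \<or> q mod 8 = 3 \<or> q mod 8 = 5 \<or> q mod 8 = 7" by presburger
  have Legendre_q: "Legendre (int p) (int q) = (if q mod 8 = 1 \<or> q mod 8 = 7 then 1 else -1)"
    using Legendre_two[OF assms(1,2)] True by simp
  show ?thesis
  proof (cases "q mod 4 = 1")
    case q4: True
    then have "q mod 8 = 1 \<or> q mod 8 = 5" using q8 by presburger
    moreover have "int q mod 8 = int (q mod 8)" by (simp add: zmod_int)
    ultimately show ?thesis using Legendre_q True \<open>odd q\<close> q4 by (auto simp: kron_prime_def eps_odd)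
  next
    case q4: False
    then have "q mod 8 = 3 \<or> q mod 8 = 7" using q8 by presburger
    moreover from this have "(- int q) mod 8 = (if q mod 8 = 3 then 5 else 1)" by presburger
    ultimately show ?thesis using Legendre_q True \<open>odd q\<close> q4 by (auto simp: kron_prime_def eps_odd)
  qed
next
  case False
  then have "p > 2" using assms prime_ge_2_nat[of p] by linarith
  have "\<not> int q dvd int p" "\<not> int p dvd int q"
    using assms primes_dvd_imp_eq by (auto simp: int_dvd_int_iff)
  then have Lpq: "Legendre p q \<in> {-1, 1}" and Lqp: "Legendre q p \<in> {-1, 1}"
    using Legendre_nonzero assms(1,3) by blast+
  have QR: "Legendre p q * Legendre q p = (-1::int) ^ ((p - 1) div 2 * ((q - 1) div 2))"
    using Quadratic_Reciprocity assms \<open>p > 2\<close> by metis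
  have "Legendre (eps q) p = Legendre p q * Legendre q p"
  proof (cases "even ((q - 1) div 2)")
    case True
    then show ?thesis using QR Legendre_one[OF assms(3)] by (simp add: eps_def)
  next
    case False
    have "(-1::int) ^ ((p - 1) div 2) \<in> {-1, 1}"
      by (cases "even ((p - 1) div 2)") auto
    then show ?thesis using False QR Legendre_minus_one[OF assms(3) \<open>p > 2\<close>]
      by (auto simp: eps_def power_mult)
  qed
  moreover have "kron_prime (eps q * int q) p = Legendre (eps q) p * Legendre q p"
    using False Legendre_mult[OF assms(3) \<open>p > 2\<close>] by (simp add: kron_prime_def)
  ultimately show ?thesis using Lpq Lqp by auto
qed

lemma kron_prime_eps_eq_jacobi:
  assumes "odd k" "prime p" "\<not> p dvd k"
  shows "kron_prime (eps k * int k) p = jacobi (int p) k"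
  using assms
proof (induction k rule: prime_divisors_induct)
  case zero
  then show ?case by simp
next
  case (unit k)
  then have "k = 1" by simp
  then show ?case
    unfolding \<open>k = 1\<close> jacobi_1 eps_1 using kron_prime_one_left unit.prems(2) by simp
next
  case (factor q k)
  have "odd q" "odd k" "k > 0" "\<not> p dvd k" "p \<noteq> q"
    using factor.prems factor.hyps by (auto intro: Nat.gr0I)
  then have "q > 2" using factor.hyps prime_ge_2_nat[of q] by (metis le_neq_implies_less even_numeral)
  have "kron_prime (eps (q * k) * int (q * k)) p
      = kron_prime (eps q * int q) p * kron_prime (eps k * int k) p"
    using eps_mult[OF \<open>odd q\<close> \<open>odd k\<close>] kron_prime_mult[OF factor.prems(2)]
    by (simp add: ac_simps)
  also have "\<dots> = jacobi (int p) q * jacobi (int p) k"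
    using kron_prime_eps_prime[OF factor.hyps \<open>q > 2\<close> factor.prems(2) \<open>p \<noteq> q\<close>]
      factor.IH[OF \<open>odd k\<close> factor.prems(2) \<open>\<not> p dvd k\<close>] jacobi_prime[OF factor.hyps] by simp
  also have "\<dots> = jacobi (int p) (q * k)"
    using jacobi_mult_right \<open>k > 0\<close> prime_gt_0_nat[OF factor.hyps] by simp
  finally show ?case .
qed

lemma kronecker_eps_eq_jacobi:
  assumes "odd k" "a > 0" "coprime a k"
  shows "kronecker (eps k * int k) a = jacobi (int a) k"
  using assms
proof (induction a rule: prime_divisors_induct)
  case zero
  then show ?case by simp
next
  case (unit a)
  then have "a = 1" by simp
  then show ?case
    unfolding \<open>a = 1\<close> kronecker_1 of_nat_1 jacobi_one_left by simp
next
  case (factor p a)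
  have "a > 0" "coprime a k" "\<not> p dvd k"
    using factor by (auto simp: prime_imp_coprime_nat coprime_absorb_left)
  have "kronecker (eps k * int k) (p * a) = kronecker (eps k * int k) p * kronecker (eps k * int k) a"
    using kronecker_mult_right \<open>a > 0\<close> prime_gt_0_nat[OF factor.hyps] by simp
  also have "\<dots> = jacobi (int p) k * jacobi (int a) k"
    using kronecker_prime[OF factor.hyps]
      kron_prime_eps_eq_jacobi[OF \<open>odd k\<close> factor.hyps \<open>\<not> p dvd k\<close>]
      factor.IH[OF \<open>odd k\<close> \<open>a > 0\<close> \<open>coprime a k\<close>] by simp
  also have "\<dots> = jacobi (int (p * a)) k"
    using jacobi_mult_left[OF \<open>odd k\<close>] by simp
  finally show ?case .
qed

section \<open>Fundamental discriminants\<close>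

lemma is_disc_mult:
  assumes "is_disc a" "is_disc b"
  shows "is_disc (a * b)"
proof -
  have "(a * b) mod 4 = ((a mod 4) * (b mod 4)) mod 4" by (simp add: mod_mult_eq)
  then show ?thesis using assms unfolding is_disc_def by auto
qed

lemma is_disc_square: "is_disc (k ^ 2)"
proof -
  have "k mod 4 \<in> {0, 1, 2, 3}" by auto
  moreover have "k ^ 2 mod 4 = ((k mod 4) * (k mod 4)) mod 4"
    by (simp add: power2_eq_square mod_mult_eq)
  ultimately show ?thesis unfolding is_disc_def by auto
qed

lemma mod4_one_mult: "(u :: int) mod 4 = 1 \<Longrightarrow> (u * z) mod 4 = z mod 4"
  by (metis mod_mult_eq mod_mod_trivial mult_1)

lemma odd_square_mod4:
  assumes "odd (k :: int)"
  shows "k ^ 2 mod 4 = 1"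
proof -
  have "k mod 4 = 1 \<or> k mod 4 = 3" using assms by presburger
  moreover have "k ^ 2 mod 4 = ((k mod 4) * (k mod 4)) mod 4"
    by (simp add: power2_eq_square mod_mult_eq)
  ultimately show ?thesis by auto
qed

lemma fund_disc_nonzero: "fund_disc D \<Longrightarrow> D \<noteq> 0"
  unfolding fund_disc_def is_disc_def
  by (metis mod_0 mult_zero_left one_less_numeral_iff semiring_norm(76))

lemma fund_disc_not_is_disc_div:
  "fund_disc D \<Longrightarrow> prime (p :: int) \<Longrightarrow> p ^ 2 dvd D \<Longrightarrow> \<not> is_disc (D div p ^ 2)"
  unfolding fund_disc_def by (metis dvd_div_mult_self prime_gt_1_int mult.commute)

lemma fund_disc_odd_prime_square_not_dvd:
  assumes "fund_disc D" "prime (p :: int)" "odd p"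
  shows "\<not> p ^ 2 dvd D"
proof
  assume "p ^ 2 dvd D"
  then obtain E where E: "D = p ^ 2 * E" by blast
  then have "is_disc E"
    using assms(1) mod4_one_mult[OF odd_square_mod4[OF assms(3)], of E]
    unfolding fund_disc_def is_disc_def by simp
  moreover have "D div p ^ 2 = E" using E assms(2) by simp
  ultimately show False using fund_disc_not_is_disc_div[OF assms(1,2) \<open>p ^ 2 dvd D\<close>] by simp
qed

lemma fund_discI:
  assumes "is_disc X" "\<And>p :: int. prime p \<Longrightarrow> p ^ 2 dvd X \<Longrightarrow> \<not> is_disc (X div p ^ 2)"
  shows "fund_disc X"
  unfolding fund_disc_def
proof (intro conjI assms(1) notI)
  assume "\<exists>D' f. 1 < f \<and> is_disc D' \<and> X = D' * f ^ 2"
  then obtain D' f where f: "f > 1" "is_disc D'" "X = D' * f ^ 2" by blast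
  then obtain p where p: "prime p" "p dvd f" using prime_factor_int[of f] by auto
  then obtain f' where f': "f = p * f'" by blast
  have "X = (D' * f' ^ 2) * p ^ 2" using f f' by (simp add: power_mult_distrib)
  moreover have "p \<noteq> 0" using p by auto
  ultimately have "p ^ 2 dvd X" "X div p ^ 2 = D' * f' ^ 2" by simp_all
  moreover have "is_disc (D' * f' ^ 2)" using f(2) is_disc_square is_disc_mult by blast
  ultimately show False using assms(2)[OF p(1)] by simp
qed

lemma fund_disc_decomposition_exists:
  assumes "is_disc x" "x \<noteq> 0"
  obtains D f where "fund_disc D" "f > 0" "x = D * int f ^ 2"
proof -
  have "\<exists>D (f::nat). fund_disc D \<and> f > 0 \<and> x = D * int f ^ 2"
    using assms
  proof (induction "nat \<bar>x\<bar>" arbitrary: x rule: less_induct)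
    case less
    show ?case
    proof (cases "fund_disc x")
      case True
      then show ?thesis by (intro exI[of _ x] exI[of _ "1::nat"]) simp
    next
      case False
      then obtain D' k where k: "k > 1" "is_disc D'" "x = D' * k ^ 2"
        using less.prems unfolding fund_disc_def by blast
      have "D' \<noteq> 0" using k less.prems by auto
      moreover have "\<bar>x\<bar> = \<bar>D'\<bar> * k ^ 2" "k ^ 2 > 1"
        using k by (simp_all add: abs_mult one_less_power)
      ultimately have "\<bar>D'\<bar> < \<bar>x\<bar>" by (simp add: mult_less_cancel_left1)
      then have "nat \<bar>D'\<bar> < nat \<bar>x\<bar>" by simp
      then obtain D f where Df: "fund_disc D" "f > 0" "D' = D * int f ^ 2"
        using less.hyps k(2) \<open>D' \<noteq> 0\<close> by blast
      have "x = D * int (f * nat k) ^ 2" "f * nat k > 0"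
        using Df k by (simp_all add: power_mult_distrib)
      then show ?thesis using Df by blast
    qed
  qed
  then show ?thesis using that by blast
qed

text \<open>Otherwise \<open>p\<^sup>2\<close> divides \<open>D\<^sub>2\<close> and could be removed from it.\<close>
lemma fund_disc_square_factor_prime_dvd:
  assumes "is_disc D1" "fund_disc D2" "prime (p :: int)" "p dvd a" "D1 * a ^ 2 = D2 * b ^ 2"
  shows "p dvd b"
proof (rule ccontr)
  assume "\<not> p dvd b"
  have "p ^ 2 dvd D2 * b ^ 2" using assms(4,5) by (metis dvd_mult dvd_power_same)
  moreover have "coprime (p ^ 2) (b ^ 2)" using assms(3) \<open>\<not> p dvd b\<close> by (simp add: prime_imp_coprime)
  ultimately have d: "p ^ 2 dvd D2" using coprime_dvd_mult_left_iff by blast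
  show False
  proof (cases "odd p")
    case True
    then show False using fund_disc_odd_prime_square_not_dvd[OF assms(2,3)] d by simp
  next
    case False
    then have "p = 2" using assms(3) two_is_prime_nat primes_dvd_imp_eq[of 2 p] by simp
    then obtain a' E where a': "a = 2 * a'" and E: "D2 = 4 * E"
      using assms(4) d by (metis dvdE power2_eq_square numeral_Bit0_eq_double mult_2)
    have "E * b ^ 2 = D1 * a' ^ 2" using assms(5) a' E by (simp add: power_mult_distrib)
    then have "is_disc (E * b ^ 2)" using assms(1) is_disc_square is_disc_mult by metis
    moreover have "(b ^ 2 * E) mod 4 = E mod 4"
      using \<open>\<not> p dvd b\<close> \<open>p = 2\<close> odd_square_mod4 mod4_one_mult by simp
    ultimately have "is_disc E" unfolding is_disc_def by (simp add: mult.commute)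
    then show False using fund_disc_not_is_disc_div[OF assms(2,3) d] E \<open>p = 2\<close> by simp
  qed
qed

lemma fund_disc_unique:
  assumes "fund_disc D1" "fund_disc D2" "(a :: int) > 0" "b > 0" "D1 * a ^ 2 = D2 * b ^ 2"
  shows "D1 = D2"
  using assms(3-5)
proof (induction "nat (a + b)" arbitrary: a b rule: less_induct)
  case less
  show ?case
  proof (cases "a = 1 \<and> b = 1")
    case True
    then show ?thesis using less.prems by simp
  next
    case False
    then obtain p where p: "prime p" "p dvd a \<or> p dvd b"
      using less.prems prime_factor_int by (metis abs_of_pos)
    have "is_disc D1" "is_disc D2" using assms(1,2) unfolding fund_disc_def by auto
    then have "p dvd a" "p dvd b"
      using p fund_disc_square_factor_prime_dvd[of D1 D2 p a b]
        fund_disc_square_factor_prime_dvd[of D2 D1 p b a] assms(1,2) less.prems(3) by auto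
    then obtain a' b' where ab: "a = p * a'" "b = p * b'" by (meson dvdE)
    have "p > 1" using p prime_gt_1_int by blast
    then have "a' > 0" "b' > 0" using ab less.prems by (auto simp: zero_less_mult_iff)
    then have "a' + b' < a + b" using ab \<open>p > 1\<close> by (simp add: add_strict_mono)
    have "p ^ 2 * (D1 * a' ^ 2) = p ^ 2 * (D2 * b' ^ 2)" using less.prems(3) ab
      by (simp add: power_mult_distrib algebra_simps)
    then have "D1 * a' ^ 2 = D2 * b' ^ 2" using \<open>p > 1\<close> by simp
    then show ?thesis using less.hyps \<open>a' + b' < a + b\<close> \<open>a' > 0\<close> \<open>b' > 0\<close> by simp
  qed
qed

lemma fund_part_cond_part_eq:
  assumes "fund_disc D" "f > 0" "x = D * int f ^ 2"
  shows "fund_part x = D" "cond_part x = f"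
proof -
  show fp: "fund_part x = D"
    unfolding fund_part_def
  proof (rule the_equality)
    fix D'' assume "fund_disc D'' \<and> (\<exists>f::nat. f > 0 \<and> x = D'' * int f ^ 2)"
    then show "D'' = D" using fund_disc_unique[of D'' D _ "int f"] assms by force
  qed (use assms in blast)
  show "cond_part x = f"
    unfolding cond_part_def fp
  proof (rule the_equality)
    fix f' :: nat assume "f' > 0 \<and> x = D * int f' ^ 2"
    then have "int f' ^ 2 = int f ^ 2" using assms fund_disc_nonzero by simp
    then show "f' = f" by (simp add: power2_eq_iff_nonneg)
  qed (use assms in simp)
qed

section \<open>The divisor function \<open>\<sigma>\<^sub>m\<^sub>,\<^sub>N\<^sub>,\<^sub>1\<close>\<close>

lemma squarefree_mult_imp_coprime:
  fixes a b :: "'a :: algebraic_semidom"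
  assumes "squarefree (a * b)"
  shows "coprime a b"
proof (rule coprimeI)
  fix d assume "d dvd a" "d dvd b"
  then have "d ^ 2 dvd a * b" by (simp add: power2_eq_square mult_dvd_mono)
  then show "is_unit d" using assms unfolding squarefree_def by blast
qed

lemma gcd_mult_left_coprime:
  fixes a b c :: nat
  assumes "coprime a b"
  shows "gcd (a * b) c = gcd a c * gcd b c"
proof (rule dvd_antisym)
  have "gcd (a * b) c dvd gcd (a * b) (a * c)" "gcd (a * b) c dvd gcd (c * b) (c * c)"
    by (auto intro: gcd_greatest)
  moreover have "a * gcd b c = gcd (a * b) (a * c)" "c * gcd b c = gcd (c * b) (c * c)"
    by (rule gcd_mult_distrib_nat)+
  ultimately have "gcd (a * b) c dvd gcd (gcd b c * a) (gcd b c * c)"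
    by (simp add: mult.commute)
  moreover have "gcd b c * gcd a c = gcd (gcd b c * a) (gcd b c * c)"
    by (rule gcd_mult_distrib_nat)
  ultimately show "gcd (a * b) c dvd gcd a c * gcd b c"
    by (simp add: mult.commute)
  have "coprime (gcd a c) (gcd b c)"
    using assms coprime_divisors by (meson gcd_dvd1)
  then show "gcd a c * gcd b c dvd gcd (a * b) c"
    by (simp add: divides_mult mult_dvd_mono)
qed

definition sigma_divisors :: "nat \<Rightarrow> nat \<Rightarrow> nat \<Rightarrow> nat set" where
  "sigma_divisors m k r = {d. d dvd r \<and> coprime d m \<and> coprime (r div d) k}"

lemma sigma_mN1_eq_sum_sigma_divisors: "sigma_mN1 m N r = (\<Sum>d\<in>sigma_divisors m (N div m) r. d)"
  unfolding sigma_mN1_def sigma_divisors_def ..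

lemma sigma_divisors_prime_mult_dvd:
  assumes "prime q" "q dvd m" "coprime q k"
  shows "sigma_divisors m k (q * r) = sigma_divisors m k r"
proof (rule Set.set_eqI, rule iffI)
  fix d assume "d \<in> sigma_divisors m k (q * r)"
  then have d: "d dvd q * r" "coprime d m" "coprime (q * r div d) k"
    unfolding sigma_divisors_def by auto
  have "coprime d q" using d(2) assms(2) by (meson coprime_divisors dvd_refl)
  then have "d dvd r" using d(1) by (simp add: coprime_dvd_mult_right_iff)
  moreover have "q * r div d = q * (r div d)" using \<open>d dvd r\<close> by (simp add: div_mult_swap)
  ultimately show "d \<in> sigma_divisors m k r"
    using d(2,3) unfolding sigma_divisors_def by simp
next
  fix d assume "d \<in> sigma_divisors m k r"
  moreover from this have "q * r div d = q * (r div d)"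
    unfolding sigma_divisors_def by (simp add: div_mult_swap)
  ultimately show "d \<in> sigma_divisors m k (q * r)"
    using assms(3) unfolding sigma_divisors_def by simp
qed

lemma sigma_divisors_prime_mult_not_dvd:
  assumes "prime q" "\<not> q dvd m" "q dvd k" "r > 0"
  shows "sigma_divisors m k (q * r) = (\<lambda>d. q * d) ` sigma_divisors m k r"
proof (rule Set.set_eqI, rule iffI)
  fix d assume "d \<in> sigma_divisors m k (q * r)"
  then have d: "d dvd q * r" "coprime d m" "coprime (q * r div d) k"
    unfolding sigma_divisors_def by auto
  define e where "e = q * r div d"
  have de: "q * r = d * e" using d(1) unfolding e_def by simp
  have "\<not> q dvd e"
    using d(3) assms(1,3) unfolding e_def[symmetric] by (meson coprime_common_divisor not_prime_unit)
  then have "q dvd d" using de assms(1) prime_dvd_mult_iff by (metis dvd_triv_left)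
  then obtain d' where d': "d = q * d'" by blast
  have "r = d' * e" using de d' prime_gt_0_nat[OF assms(1)] by simp
  then have "d' dvd r" "r div d' = e" using assms(4) by auto
  then have "d' \<in> sigma_divisors m k r"
    using d(2,3) d' unfolding sigma_divisors_def e_def[symmetric] by simp
  then show "d \<in> (\<lambda>d. q * d) ` sigma_divisors m k r" using d' by blast
next
  fix d assume "d \<in> (\<lambda>d. q * d) ` sigma_divisors m k r"
  then obtain d' where "d = q * d'" "d' dvd r" "coprime d' m" "coprime (r div d') k"
    unfolding sigma_divisors_def by auto
  moreover have "coprime q m" using assms(1,2) prime_imp_coprime by blast
  ultimately show "d \<in> sigma_divisors m k (q * r)"
    using prime_gt_0_nat[OF assms(1)] unfolding sigma_divisors_def by simp
qed

lemma sigma_mN1_prime_mult: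
  assumes "prime q" "q dvd N" "squarefree N" "m dvd N" "r > 0"
  shows "sigma_mN1 m N (q * r) * gcd q m = sigma_mN1 m N r * q"
proof -
  define k where "k = N div m"
  have N: "N = m * k" using assms(4) unfolding k_def by simp
  then have "coprime m k" using assms(3) squarefree_mult_imp_coprime by blast
  show ?thesis
  proof (cases "q dvd m")
    case True
    then have "coprime q k" using \<open>coprime m k\<close> by (meson coprime_divisors dvd_refl)
    then show ?thesis
      using True sigma_divisors_prime_mult_dvd[OF assms(1) True]
      by (simp add: sigma_mN1_eq_sum_sigma_divisors k_def[symmetric] gcd_nat.absorb1)
  next
    case False
    then have "q dvd k" using assms(1,2) N prime_dvd_mult_iff by blast
    have "(\<Sum>d\<in>(\<lambda>d. q * d) ` sigma_divisors m k r. d) = q * (\<Sum>d\<in>sigma_divisors m k r. d)"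
      using prime_gt_0_nat[OF assms(1)]
      by (simp add: sum.reindex inj_on_def sum_distrib_left)
    moreover have "gcd q m = 1" using False assms(1) by (metis coprime_iff_gcd_eq_1 prime_imp_coprime)
    ultimately show ?thesis
      using sigma_divisors_prime_mult_not_dvd[OF assms(1) False \<open>q dvd k\<close> assms(5)]
      by (simp add: sigma_mN1_eq_sum_sigma_divisors k_def[symmetric])
  qed
qed

lemma sigma_mN1_mult:
  assumes "g dvd N" "squarefree N" "m dvd N" "r > 0"
  shows "sigma_mN1 m N (g * r) * gcd g m = sigma_mN1 m N r * g"
  using assms(1)
proof (induction g rule: prime_divisors_induct)
  case zero
  then show ?case using assms(2) by simp
next
  case (unit g)
  then show ?case by simp
next
  case (factor q g)
  have "squarefree (q * g)" using factor.prems assms(2) squarefree_mono by blast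
  then have "gcd (q * g) m = gcd q m * gcd g m"
    using squarefree_mult_imp_coprime gcd_mult_left_coprime by blast
  moreover have "g > 0" using factor.prems assms(2) by (auto intro: Nat.gr0I)
  moreover have "q dvd N" "g dvd N" using factor.prems by (auto intro: dvd_mult_left dvd_mult_right)
  ultimately show ?case
    using sigma_mN1_prime_mult[OF factor.hyps \<open>q dvd N\<close> assms(2,3), of "g * r"] factor.IH assms(4)
    by (simp add: ac_simps)
qed

section \<open>Twisting a fundamental discriminant by an odd squarefree level\<close>

lemma coprime_int_primeI:
  fixes a b :: int
  assumes "\<And>p. prime p \<Longrightarrow> p dvd a \<Longrightarrow> p dvd b \<Longrightarrow> False"
  shows "coprime a b"
proof (rule ccontr)
  assume "\<not> coprime a b"
  then have "\<bar>gcd a b\<bar> \<noteq> 1" by (simp add: coprime_iff_gcd_eq_1)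
  then obtain p where "prime p" "p dvd gcd a b" using prime_factor_int by blast
  then show False using assms by (meson dvd_trans gcd_dvd1 gcd_dvd2)
qed

lemma fund_disc_gcd_split:
  assumes "fund_disc D" "odd l" "squarefree l"
  obtains g h D0 where "l = g * h" "D = int g * D0" "coprime (int g) D0" "coprime (int h) D0"
proof -
  define g where "g = nat (gcd (int l) D)"
  have ig: "int g = gcd (int l) D" unfolding g_def by simp
  then have "int g dvd int l" "int g dvd D" by simp_all
  then obtain h D0 where lgh: "l = g * h" and DD0: "D = int g * D0"
    by (metis dvdE int_dvd_int_iff)
  have "coprime g h" using assms(3) lgh squarefree_mult_imp_coprime by blast
  have "coprime (int h) D0"
  proof (rule coprime_int_primeI)
    fix p :: int assume p: "prime p" "p dvd int h" "p dvd D0"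
    then have "p dvd gcd (int l) D" using lgh DD0 by simp
    then have "p dvd int g" using ig by simp
    then show False using p \<open>coprime g h\<close> coprime_common_divisor not_prime_unit
      by (metis coprime_int_iff)
  qed
  moreover have "coprime (int g) D0"
  proof (rule coprime_int_primeI)
    fix p :: int assume p: "prime p" "p dvd int g" "p dvd D0"
    then have "p ^ 2 dvd D" unfolding DD0 by (simp add: power2_eq_square mult_dvd_mono)
    moreover have "odd p" using p(2) assms(2) lgh by (metis dvd_trans even_mult_iff even_of_nat)
    ultimately show False using fund_disc_odd_prime_square_not_dvd[OF assms(1) p(1)] by blast
  qed
  ultimately show ?thesis using that lgh DD0 by blast
qed

text \<open>With \<open>l = g h\<close> and \<open>D\<^sub>1 = \<epsilon>\<^sub>l h D\<^sub>0\<close> we have \<open>g\<^sup>2 D\<^sub>1 = (\<epsilon>\<^sub>l l) D\<close>,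
  where \<open>g\<^sup>2\<close> and \<open>\<epsilon>\<^sub>l l\<close> are both 1 mod 4; so \<open>D\<^sub>1\<close> inherits the behaviour
  of \<open>D\<close> at 2, and odd square factors are excluded by the squarefreeness of \<open>h\<close>
  and the fundamentality of \<open>D\<close>.\<close>
lemma fund_disc_twist:
  assumes fD: "fund_disc D" and D: "D = int g * D0" and og: "odd g" and oh: "odd h"
    and sq: "squarefree (g * h)" and ch: "coprime (int h) D0"
  shows "fund_disc (eps (g * h) * int h * D0)"
proof -
  define D1 where "D1 = eps (g * h) * int h * D0"
  define u where "u = eps (g * h) * int (g * h)"
  have u4: "u mod 4 = 1" unfolding u_def using og oh by (intro eps_mult_self_mod4) simp
  have key: "int g ^ 2 * D1 = u * D" unfolding D1_def u_def D by (simp add: power2_eq_square algebra_simps)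
  have g4: "int g ^ 2 mod 4 = 1" using og by (intro odd_square_mod4) simp
  have "is_disc D" using fD unfolding fund_disc_def by simp
  have sqh: "squarefree h" using sq squarefree_multD by blast
  have "fund_disc D1"
  proof (rule fund_discI)
    show "is_disc D1"
      using \<open>is_disc D\<close> mod4_one_mult[OF g4, of D1] mod4_one_mult[OF u4, of D] key
      unfolding is_disc_def by simp
  next
    fix p :: int assume p: "prime p" "p ^ 2 dvd D1"
    show "\<not> is_disc (D1 div p ^ 2)"
    proof (cases "odd p")
      case True
      have "eps (g * h) * D1 = int h * D0"
        using eps_times_self[of "g * h"] unfolding D1_def by (simp add: algebra_simps)
      then have phd: "p ^ 2 dvd int h * D0" using p(2) by (metis dvd_mult2 mult.commute)
      show ?thesis
      proof (cases "p dvd int h")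
        case True
        then have "\<not> p dvd D0" using ch p(1) by (meson coprime_common_divisor not_prime_unit)
        then have "coprime (p ^ 2) D0" using p(1) by (simp add: prime_imp_coprime)
        then have "p ^ 2 dvd int h" using phd coprime_dvd_mult_left_iff by blast
        moreover have "p = int (nat p)" using p(1) prime_gt_0_int[of p] by simp
        ultimately have "nat p ^ 2 dvd h"
          by (metis int_dvd_int_iff of_nat_power)
        then have "nat p = 1" using sqh unfolding squarefree_def by simp
        then show ?thesis using p(1) \<open>p = int (nat p)\<close> by simp
      next
        case False
        then have "coprime (p ^ 2) (int h)" using p(1) by (simp add: prime_imp_coprime)
        then have "p ^ 2 dvd D0" using phd coprime_dvd_mult_right_iff by blast
        then have "p ^ 2 dvd D" unfolding D by simp
        then show ?thesis using fund_disc_odd_prime_square_not_dvd[OF fD p(1) True] by blast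
      qed
    next
      case False
      then have p2: "p = 2" using p(1) two_is_prime_nat primes_dvd_imp_eq[of 2 p] by simp
      have "\<not> 2 dvd u" using u4 by presburger
      then have "coprime (2 ^ 2) u"
        using coprime_power_left_iff[of 2 2 u] by simp
      moreover have "2 ^ 2 dvd u * D" using p(2) p2 key dvd_mult[of "2 ^ 2" D1 "int g ^ 2"] by simp
      ultimately have d4: "2 ^ 2 dvd D" using coprime_dvd_mult_right_iff by blast
      obtain E E1 where E: "D = 4 * E" and E1: "D1 = 4 * E1"
        using d4 p(2) p2 by (metis dvdE power2_eq_square numeral_Bit0_eq_double mult_2)
      have "int g ^ 2 * E1 = u * E" using key E E1 by (simp add: algebra_simps)
      then have "E1 mod 4 = E mod 4"
        using mod4_one_mult[OF g4, of E1] mod4_one_mult[OF u4, of E] by simp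
      moreover have "\<not> is_disc (D div 2 ^ 2)"
        using fund_disc_not_is_disc_div[OF fD _ d4] two_is_prime_nat by simp
      ultimately show ?thesis using E E1 p2 unfolding is_disc_def by simp
    qed
  qed
  then show ?thesis unfolding D1_def .
qed

lemma gcd_twist:
  assumes "coprime (int g) D0"
  shows "gcd (int (g * h)) (eps (g * h) * int h * D0) = int h"
proof -
  have "coprime (int g) (eps (g * h) * D0)" using assms eps_cases[of "g * h"] by auto
  then show ?thesis
    using gcd_mult_left[of "int h" "int g" "eps (g * h) * D0"]
    by (simp add: algebra_simps coprime_iff_gcd_eq_1)
qed

lemma kronecker_twist:
  assumes "odd g" "odd h" "coprime a (g * h)" "a > 0"
  shows "kronecker (eps (g * h) * int h * D0) a * jacobi (int a) (g * h) = kronecker (int g * D0) a"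
proof -
  have g0: "g > 0" and h0: "h > 0" using assms(1,2) by (auto intro: Nat.gr0I)
  have cg: "coprime a g" and ch: "coprime a h" using assms(3) by auto
  have eps_sq: "kronecker (eps g) a * kronecker (eps g) a = 1"
    using kronecker_mult_left[of "eps g" "eps g" a] eps_times_self[of g] kronecker_one_left by simp
  have jacobi_sq: "jacobi (int a) h * jacobi (int a) h = 1"
    using jacobi_mult_left[OF assms(2), of "int a" "int a"] jacobi_square[OF ch]
    by (simp add: power2_eq_square)
  have jacobi_g: "jacobi (int a) g = kronecker (eps g) a * kronecker (int g) a"
    using kronecker_eps_eq_jacobi[OF assms(1,4) cg] by (simp add: kronecker_mult_left)
  have "kronecker (eps (g * h) * int h * D0) a * jacobi (int a) (g * h)
      = (kronecker (eps g) a * kronecker (eps h * int h) a * kronecker D0 a)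
        * (jacobi (int a) g * jacobi (int a) h)"
    using eps_mult[OF assms(1,2)] jacobi_mult_right[OF g0 h0]
    by (simp add: kronecker_mult_left mult.assoc)
  also have "\<dots> = (kronecker (eps g) a * kronecker (eps g) a) * (jacobi (int a) h * jacobi (int a) h)
        * (kronecker (int g) a * kronecker D0 a)"
    unfolding kronecker_eps_eq_jacobi[OF assms(2,4) ch] jacobi_g by (simp add: ac_simps)
  also have "\<dots> = kronecker (int g * D0) a"
    unfolding eps_sq jacobi_sq by (simp add: kronecker_mult_left)
  finally show ?thesis .
qed

section \<open>The class numbers at level \<open>l n\<close>\<close>

definition H_euler_factor :: "nat \<Rightarrow> nat \<Rightarrow> int \<Rightarrow> real" where
  "H_euler_factor m N D' = (\<Prod>p\<in>prime_factors (N div m).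
     (1 - of_int (kronecker D' p) / real p) / (1 - 1 / (real p)^2))"

definition H_divisor_sum :: "nat \<Rightarrow> nat \<Rightarrow> nat \<Rightarrow> int \<Rightarrow> nat \<Rightarrow> real" where
  "H_divisor_sum l m N D f = (\<Sum>a\<in>{a. a dvd f \<and> coprime a N}.
     of_int (moebius a * kronecker D a * jacobi (int a) l) * real (sigma_mN1 m N (f div a)))"

lemma H_eq_fund_disc:
  assumes "n > 0" "fund_disc D" "f > 0" "- eps l * int n = D * int f ^ 2"
    and "fund_disc D'" "f' > 0" "- int l * int n = D' * int f' ^ 2"
  shows "H l m N n = L0_m m D' * H_euler_factor m N D'
    * (of_int (gcd (int l) D) / of_int (gcd (gcd (int l) D) (int m)))
    * H_divisor_sum l m N D f"
proof -
  have "is_disc (- eps l * int n)"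
    using assms(2,4) is_disc_mult is_disc_square unfolding fund_disc_def by metis
  then show ?thesis
    using assms fund_part_cond_part_eq[OF assms(2-4)] fund_part_cond_part_eq[OF assms(5-7)]
    unfolding H_def H_euler_factor_def H_divisor_sum_def Let_def by simp
qed

lemma is_disc_level_mult_iff:
  assumes "odd l"
  shows "is_disc (- eps l * int (l * n)) \<longleftrightarrow> is_disc (- int n)"
proof -
  have "- eps l * int (l * n) = (eps l * int l) * (- int n)" by simp
  then have "(- eps l * int (l * n)) mod 4 = (- int n) mod 4"
    using mod4_one_mult[OF eps_mult_self_mod4[OF assms]] by presburger
  then show ?thesis unfolding is_disc_def by simp
qed

lemma H_divisor_sum_twist:
  assumes "odd g" "odd h" "g * h dvd N" "squarefree N" "m dvd N" "f > 0"
  shows "H_divisor_sum (g * h) m N (eps (g * h) * int h * D0) (g * f)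
    = real g / real (gcd g m) * H_divisor_sum 1 m N (int g * D0) f"
proof -
  have "g dvd N" using assms(3) by (rule dvd_mult_left)
  have divisors: "{a. a dvd g * f \<and> coprime a N} = {a. a dvd f \<and> coprime a N}"
    using \<open>g dvd N\<close> by (auto simp: coprime_dvd_mult_right_iff intro: coprime_divisors[OF dvd_refl])
  have "of_int (moebius a * kronecker (eps (g * h) * int h * D0) a * jacobi (int a) (g * h))
        * real (sigma_mN1 m N (g * f div a))
      = real g / real (gcd g m)
        * (of_int (moebius a * kronecker (int g * D0) a * jacobi (int a) 1) * real (sigma_mN1 m N (f div a)))"
    if "a dvd f" "coprime a N" for a
  proof -
    have "a > 0" "f div a > 0" using that(1) assms(6) by (auto intro: Nat.gr0I dest: dvd_imp_le)
    have "coprime a (g * h)" using that(2) assms(3) coprime_divisors[OF dvd_refl] by blast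
    then have "kronecker (eps (g * h) * int h * D0) a * jacobi (int a) (g * h) = kronecker (int g * D0) a"
      using kronecker_twist assms(1,2) \<open>a > 0\<close> by blast
    moreover have "g * f div a = g * (f div a)" using that(1) by (simp add: div_mult_swap)
    moreover have "real (sigma_mN1 m N (g * (f div a))) * real (gcd g m)
        = real (sigma_mN1 m N (f div a)) * real g"
      using sigma_mN1_mult[OF \<open>g dvd N\<close> assms(4,5) \<open>f div a > 0\<close>] by (metis of_nat_mult)
    moreover have "gcd g m > 0" using assms(1) by (auto intro: Nat.gr0I)
    ultimately show ?thesis unfolding jacobi_1 by (simp add: field_simps mult.assoc)
  qed
  then show ?thesis
    unfolding H_divisor_sum_def divisors sum_distrib_left by (intro sum.cong) auto
qed

lemma gcd_mult_gcd_div_eq: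
  fixes l m N :: nat
  assumes "squarefree N" "l dvd N" "m dvd N"
  shows "gcd l m * gcd l (N div m) = l"
proof -
  have N: "N = m * (N div m)" using assms(3) by simp
  then have "coprime m (N div m)" using assms(1) squarefree_mult_imp_coprime by metis
  then have "gcd N l = gcd m l * gcd (N div m) l" using N gcd_mult_left_coprime by metis
  then show ?thesis using assms(2) by (simp add: gcd.commute gcd_nat.absorb1)
qed

lemma div_gcd_mult_div_gcd_eq:
  assumes "squarefree N" "g * h dvd N" "m dvd N"
  shows "real h / real (gcd h m) * (real g / real (gcd g m)) = real (gcd (g * h) (N div m))"
proof -
  have "coprime g h" using assms(1,2) squarefree_mono squarefree_mult_imp_coprime by blast
  then have "gcd g m * gcd h m * gcd (g * h) (N div m) = g * h"
    using gcd_mult_gcd_div_eq[OF assms] gcd_mult_left_coprime by metis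
  then have "real (gcd g m) * real (gcd h m) * real (gcd (g * h) (N div m)) = real g * real h"
    by (metis of_nat_mult)
  moreover have "gcd g m > 0" "gcd h m > 0" using assms(1,2) by (auto intro!: Nat.gr0I)
  ultimately show ?thesis by (simp add: field_simps)
qed

lemma H_level_mult_fund_disc:
  assumes "odd N" "squarefree N" "l dvd N" "m dvd N"
    and "fund_disc D" "f > 0" "- int n = D * int f ^ 2"
  shows "H l m N (l * n) = real (gcd l (N div m)) * H1 m N n"
proof -
  have "odd l" "squarefree l" using assms(1-3) squarefree_mono by (auto dest: dvd_trans)
  have "n > 0" using assms(5-7) fund_disc_nonzero by (auto intro: Nat.gr0I)
  obtain g h D0 where gh: "l = g * h" "D = int g * D0" "coprime (int g) D0" "coprime (int h) D0"
    using fund_disc_gcd_split[OF assms(5) \<open>odd l\<close> \<open>squarefree l\<close>] .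
  have "odd g" "odd h" using \<open>odd l\<close> gh(1) by auto
  define D1 where "D1 = eps l * int h * D0"
  have "fund_disc D1"
    unfolding D1_def gh(1)
    using fund_disc_twist assms(5) gh \<open>odd g\<close> \<open>odd h\<close> \<open>squarefree l\<close> by blast
  have n: "int n = - (D * int f ^ 2)" using assms(7) by simp
  have "- eps l * int (l * n) = D1 * int (g * f) ^ 2" "- int l * int (l * n) = D * int (l * f) ^ 2"
    unfolding D1_def gh(1) of_nat_mult n gh(2) by (simp_all add: algebra_simps power2_eq_square)
  moreover have "l * n > 0" "g * f > 0" "l * f > 0"
    using \<open>n > 0\<close> \<open>odd l\<close> \<open>odd g\<close> assms(6) by (auto intro!: Nat.gr0I)
  ultimately have "H l m N (l * n) = L0_m m D * H_euler_factor m N D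
      * (of_int (gcd (int l) D1) / of_int (gcd (gcd (int l) D1) (int m))) * H_divisor_sum l m N D1 (g * f)"
    using H_eq_fund_disc \<open>fund_disc D1\<close> assms(5) by blast
  also have "\<dots> = L0_m m D * H_euler_factor m N D * (real h / real (gcd h m))
      * H_divisor_sum l m N D1 (g * f)"
    using gcd_twist[OF gh(3), of h] unfolding D1_def gh(1) by simp
  also have "\<dots> = L0_m m D * H_euler_factor m N D
      * (real h / real (gcd h m) * (real g / real (gcd g m))) * H_divisor_sum 1 m N D f"
    using H_divisor_sum_twist[OF \<open>odd g\<close> \<open>odd h\<close> _ assms(2,4,6), of D0] assms(3)
    unfolding D1_def gh(1) gh(2) by simp
  also have "\<dots> = real (gcd l (N div m)) * (L0_m m D * H_euler_factor m N D * H_divisor_sum 1 m N D f)"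
    using div_gcd_mult_div_gcd_eq[OF assms(2) _ assms(4), of g h] assms(3) unfolding gh(1) by simp
  also have "L0_m m D * H_euler_factor m N D * H_divisor_sum 1 m N D f = H1 m N n"
    using H_eq_fund_disc[of n D f 1 D f] \<open>n > 0\<close> assms(5-7) unfolding eps_1 by simp
  finally show ?thesis .
qed

theorem proposition3p6:
  fixes N l m n :: nat
  assumes "odd N" and "squarefree N" and "1 < l" and "l dvd N" and "m dvd N"
  shows "H l m N (l * n) = real (gcd l (N div m)) * H1 m N n"
proof (cases "n = 0")
  case True
  have "N > 0" using assms(1) by (intro Nat.gr0I) auto
  then show ?thesis using True unfolding H_def by auto
next
  case False
  have "odd l" using assms(1,4) dvd_trans by blast
  then have "l \<noteq> 0" by (metis dvd_0_right)
  show ?thesis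
  proof (cases "is_disc (- int n)")
    case True
    then obtain D f where "fund_disc D" "f > 0" "- int n = D * int f ^ 2"
      using fund_disc_decomposition_exists False by (metis neg_equal_0_iff_equal of_nat_eq_0_iff)
    then show ?thesis using H_level_mult_fund_disc assms by blast
  next
    case False
    then show ?thesis
      using \<open>n \<noteq> 0\<close> \<open>l \<noteq> 0\<close> is_disc_level_mult_iff[OF \<open>odd l\<close>]
      unfolding H_def eps_1 by simp
  qed
qed

end
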